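(* Let $k\ge2$. The graph $H_k$ has order $n=5k$, minimum degree $\delta(H_k)=2$, $\gamma_2(H_k)=\frac{3n}{5}$, and $\operatorname{ZIR}(H_k)=\frac{2n}{5}=n-\gamma_2(H_k)$. Furthermore, $\operatorname{Z}(H_k)=k+2$.
   Context: $H_k$ consists of $k$ disjoint 5-cycles, the $i$th with vertices $v_{i,1},\dots,v_{i,5}$ in cyclic order, together with edges $v_{i,3}v_{i+1,1}$ for $1\le i\le k-1$ and the edge $v_{k,3}v_{1,1}$. A 2-dominating set is a set $D$ such that every vertex not in $D$ has at least two neighbors in $D$; $\gamma_2$ is its minimum size. Zero forcing: a blue vertex $u$ changes a white vertex $w$ to blue if $w$ is the only white neighbor of $u$; $\operatorname{Z}(G)$ is the minimum size of a set of initially blue vertices from which all vertices eventually become blue. A nonempty $F\subseteq V(G)$ is a fort if every $v\notin F$ has $|N(v)\cap F|\ne1$. A private fort of $x\in S$ relative to $S$ is a fort $F$ with $S\cap F=\{x\}$; $S$ is a ZIr-set if every element of $S$ has a private fort. $\operatorname{ZIR}(G)$ is the maximum cardinality of an inclusion-maximal ZIr-set. *)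

theory Defs
  imports Complex_Main
begin

text \<open>Simple graphs are given by a finite vertex set V and a symmetric,
irreflexive adjacency relation E (only edges inside V matter).\<close>

definition nbrs :: "'a set \<Rightarrow> ('a \<Rightarrow> 'a \<Rightarrow> bool) \<Rightarrow> 'a \<Rightarrow> 'a set" where
  "nbrs V E v = {u \<in> V. E v u}"

definition min_degree :: "'a set \<Rightarrow> ('a \<Rightarrow> 'a \<Rightarrow> bool) \<Rightarrow> nat" where
  "min_degree V E = Min ((\<lambda>v. card (nbrs V E v)) ` V)"

definition two_dominating :: "'a set \<Rightarrow> ('a \<Rightarrow> 'a \<Rightarrow> bool) \<Rightarrow> 'a set \<Rightarrow> bool" where
  "two_dominating V E D \<longleftrightarrow> D \<subseteq> V \<and> (\<forall>v \<in> V - D. card (nbrs V E v \<inter> D) \<ge> 2)"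

definition gamma2 :: "'a set \<Rightarrow> ('a \<Rightarrow> 'a \<Rightarrow> bool) \<Rightarrow> nat" where
  "gamma2 V E = Min {card D | D. two_dominating V E D}"

text \<open>Zero forcing: the set of vertices that eventually become blue
(final colouring is independent of the order of forces).\<close>
inductive_set zf_closure :: "'a set \<Rightarrow> ('a \<Rightarrow> 'a \<Rightarrow> bool) \<Rightarrow> 'a set \<Rightarrow> 'a set"
  for V E S where
  init: "x \<in> S \<Longrightarrow> x \<in> V \<Longrightarrow> x \<in> zf_closure V E S"
| force: "u \<in> zf_closure V E S \<Longrightarrow> w \<in> nbrs V E u \<Longrightarrow>
          (\<forall>y \<in> nbrs V E u. y \<noteq> w \<longrightarrow> y \<in> zf_closure V E S) \<Longrightarrow>
          w \<in> zf_closure V E S"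

definition zero_forcing_set :: "'a set \<Rightarrow> ('a \<Rightarrow> 'a \<Rightarrow> bool) \<Rightarrow> 'a set \<Rightarrow> bool" where
  "zero_forcing_set V E S \<longleftrightarrow> S \<subseteq> V \<and> zf_closure V E S = V"

definition Z :: "'a set \<Rightarrow> ('a \<Rightarrow> 'a \<Rightarrow> bool) \<Rightarrow> nat" where
  "Z V E = Min {card S | S. zero_forcing_set V E S}"

definition is_fort :: "'a set \<Rightarrow> ('a \<Rightarrow> 'a \<Rightarrow> bool) \<Rightarrow> 'a set \<Rightarrow> bool" where
  "is_fort V E F \<longleftrightarrow> F \<noteq> {} \<and> F \<subseteq> V \<and> (\<forall>v \<in> V - F. card (nbrs V E v \<inter> F) \<noteq> 1)"

definition private_fort :: "'a set \<Rightarrow> ('a \<Rightarrow> 'a \<Rightarrow> bool) \<Rightarrow> 'a set \<Rightarrow> 'a \<Rightarrow> 'a set \<Rightarrow> bool" where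
  "private_fort V E S x F \<longleftrightarrow> is_fort V E F \<and> S \<inter> F = {x}"

definition ZIr_set :: "'a set \<Rightarrow> ('a \<Rightarrow> 'a \<Rightarrow> bool) \<Rightarrow> 'a set \<Rightarrow> bool" where
  "ZIr_set V E S \<longleftrightarrow> S \<subseteq> V \<and> (\<forall>x \<in> S. \<exists>F. private_fort V E S x F)"

definition maximal_ZIr_set :: "'a set \<Rightarrow> ('a \<Rightarrow> 'a \<Rightarrow> bool) \<Rightarrow> 'a set \<Rightarrow> bool" where
  "maximal_ZIr_set V E S \<longleftrightarrow> ZIr_set V E S \<and> (\<forall>T. ZIr_set V E T \<and> S \<subseteq> T \<longrightarrow> T = S)"

definition ZIR :: "'a set \<Rightarrow> ('a \<Rightarrow> 'a \<Rightarrow> bool) \<Rightarrow> nat" where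
  "ZIR V E = Max {card S | S. maximal_ZIr_set V E S}"

text \<open>The graph H_k: vertex (i,j) is v_{i,j}, 1 \<le> i \<le> k, 1 \<le> j \<le> 5.\<close>
definition Hk_V :: "nat \<Rightarrow> (nat \<times> nat) set" where
  "Hk_V k = {(i, j). 1 \<le> i \<and> i \<le> k \<and> 1 \<le> j \<and> j \<le> 5}"

definition Hk_link :: "nat \<Rightarrow> nat \<times> nat \<Rightarrow> nat \<times> nat \<Rightarrow> bool" where
  "Hk_link k a b \<longleftrightarrow>
     (\<exists>i. 1 \<le> i \<and> i \<le> k - 1 \<and> a = (i, 3) \<and> b = (i + 1, 1)) \<or> (a = (k, 3) \<and> b = (1, 1))"

definition Hk_E :: "nat \<Rightarrow> nat \<times> nat \<Rightarrow> nat \<times> nat \<Rightarrow> bool" where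
  "Hk_E k a b \<longleftrightarrow> a \<in> Hk_V k \<and> b \<in> Hk_V k \<and>
     ((fst a = fst b \<and> (snd b = snd a mod 5 + 1 \<or> snd a = snd b mod 5 + 1))
      \<or> Hk_link k a b \<or> Hk_link k b a)"

end

theory Submission
  imports Defs
begin

text \<open>
  Describe a vertex set of H_k by its traces on the k five-cycles; positions 1 and 3 carry the
  links to the neighbouring cycles, positions 2, 4, 5 are the vertices of degree 2.
  A 2-dominating set needs three vertices on every cycle, and the degree-2 vertices suffice.
  A nonempty trace of a fort is a vertex cover of the five-cycle, or one of the traces {2} and
  {4, 5}, which require both outside neighbours in the fort. Hence a ZIr-set has at most three
  vertices on a cycle, and a cycle carrying three is followed by one carrying at most one; on
  average this is at most two per cycle, attained by the degree-3 vertices.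
  The degree-2 vertices of each cycle form a fort, so a zero forcing set meets all of them; with
  only k + 1 vertices all cycles but one would carry a single degree-2 vertex, and a fort avoiding
  the set can be built. Conversely v_{1,1}, v_{1,4} and all v_{i,2} force the graph cycle by cycle.
\<close>

section \<open>Forts and zero forcing\<close>

lemma zf_closure_subset: "zf_closure V E S \<subseteq> V"
proof
  show "x \<in> V" if "x \<in> zf_closure V E S" for x
    using that
  proof induction
    case (init x)
    then show ?case by blast
  next
    case (force u w)
    then show ?case unfolding nbrs_def by blast
  qed
qed

lemma fort_disjoint_zf_closure:
  assumes fort: "is_fort V E F" and disj: "F \<inter> S = {}"
  shows "F \<inter> zf_closure V E S = {}"
proof -
  have "w \<notin> F" if "w \<in> zf_closure V E S" for w
    using that
  proof induction
    case (init x)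
    then show ?case using disj by blast
  next
    case (force u w)
    have sub: "nbrs V E u \<inter> F \<subseteq> {w}"
      using force.IH(2) by blast
    have "u \<in> V - F"
      using force.hyps(1) force.IH(1) zf_closure_subset[of V E S] by blast
    then have card: "card (nbrs V E u \<inter> F) \<noteq> 1"
      using fort unfolding is_fort_def by blast
    show ?case
    proof
      assume "w \<in> F"
      with sub force.hyps(2) have "nbrs V E u \<inter> F = {w}" by blast
      with card show False by simp
    qed
  qed
  then show ?thesis by auto
qed

lemma zero_forcing_set_meets_fort:
  assumes "zero_forcing_set V E S" "is_fort V E F"
  shows "F \<inter> S \<noteq> {}"
  using assms fort_disjoint_zf_closure[of V E F S]
  by (auto simp: zero_forcing_set_def is_fort_def)

lemma private_fortE:
  assumes "ZIr_set V E S" "x \<in> S"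
  obtains F where "is_fort V E F" "S \<inter> F = {x}"
  using assms by (auto simp: ZIr_set_def private_fort_def)

lemma Min_card_eqI:
  assumes "finite V" "\<And>D. P D \<Longrightarrow> D \<subseteq> V" "P D0" "\<And>D. P D \<Longrightarrow> card D0 \<le> card D"
  shows "Min {card D | D. P D} = card D0"
proof (rule Min_eqI)
  have "{card D | D. P D} \<subseteq> card ` Pow V"
    using assms(2) by blast
  then show "finite {card D | D. P D}"
    by (rule finite_subset) (simp add: assms(1))
qed (use assms(3,4) in auto)

lemma Max_card_eqI:
  assumes "finite V" "\<And>D. P D \<Longrightarrow> D \<subseteq> V" "P D0" "\<And>D. P D \<Longrightarrow> card D \<le> card D0"
  shows "Max {card D | D. P D} = card D0"
proof (rule Max_eqI)
  have "{card D | D. P D} \<subseteq> card ` Pow V"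
    using assms(2) by blast
  then show "finite {card D | D. P D}"
    by (rule finite_subset) (simp add: assms(1))
qed (use assms(3,4) in auto)

lemma card_insert_Int:
  "finite A \<Longrightarrow> a \<notin> A \<Longrightarrow> card (insert a A \<inter> X) = of_bool (a \<in> X) + card (A \<inter> X)"
  by (cases "a \<in> X") (simp_all add: Int_insert_left)

lemma sum_ge_1_le_card_Suc:
  fixes c :: "'a \<Rightarrow> nat"
  assumes "finite I" "I \<noteq> {}" "\<And>i. i \<in> I \<Longrightarrow> 1 \<le> c i" "sum c I \<le> card I + 1"
  obtains j where "j \<in> I" "c j \<le> 2" "\<And>i. i \<in> I - {j} \<Longrightarrow> c i = 1"
proof -
  define d where "d i = c i - 1" for i
  have c: "c i = Suc (d i)" if "i \<in> I" for i
    using assms(3)[OF that] by (simp add: d_def)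
  have "sum c I = sum d I + card I"
    using c by (simp add: sum_Suc)
  then have d: "sum d I \<le> 1"
    using assms(4) by simp
  show thesis
  proof (cases "\<forall>i\<in>I. d i = 0")
    case True
    obtain j where "j \<in> I" using assms(2) by blast
    with True show ?thesis
      by (intro that[of j]) (simp_all add: c)
  next
    case False
    then obtain j where j: "j \<in> I" "d j \<noteq> 0" by blast
    have "d j + sum d (I - {j}) \<le> 1"
      using d j(1) assms(1) by (simp add: sum.remove)
    then have dj: "d j = 1" and rest: "sum d (I - {j}) = 0"
      using j(2) by simp_all
    have "d i = 0" if "i \<in> I - {j}" for i
      using rest assms(1) that by simp
    with j(1) dj show ?thesis
      by (intro that[of j]) (simp_all add: c)
  qed
qed

section \<open>Traces on a five-cycle\<close>

definition count5 :: "(nat \<Rightarrow> bool) \<Rightarrow> nat" where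
  "count5 f = of_bool (f 1) + of_bool (f 2) + of_bool (f 3) + of_bool (f 4) + of_bool (f 5)"

definition indep5 :: "(nat \<Rightarrow> bool) \<Rightarrow> bool" where
  "indep5 g \<longleftrightarrow> \<not> (g 1 \<and> g 2) \<and> \<not> (g 2 \<and> g 3) \<and> \<not> (g 3 \<and> g 4) \<and> \<not> (g 4 \<and> g 5) \<and> \<not> (g 5 \<and> g 1)"

text \<open>
  The conditions a fort (resp. a 2-dominating set) imposes on the five vertices of one cycle,
  in terms of its trace; \<open>p\<close> and \<open>q\<close> say whether the outside neighbours v_{i-1,3} of position 1
  and v_{i+1,1} of position 3 belong to it.
\<close>

definition fort_cycle :: "bool \<Rightarrow> (nat \<Rightarrow> bool) \<Rightarrow> bool \<Rightarrow> bool" where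
  "fort_cycle p f q \<longleftrightarrow>
     (\<not> f 1 \<longrightarrow> of_bool (f 2) + of_bool (f 5) + of_bool p \<noteq> (1::nat)) \<and>
     (\<not> f 2 \<longrightarrow> of_bool (f 1) + of_bool (f 3) \<noteq> (1::nat)) \<and>
     (\<not> f 3 \<longrightarrow> of_bool (f 2) + of_bool (f 4) + of_bool q \<noteq> (1::nat)) \<and>
     (\<not> f 4 \<longrightarrow> of_bool (f 3) + of_bool (f 5) \<noteq> (1::nat)) \<and>
     (\<not> f 5 \<longrightarrow> of_bool (f 4) + of_bool (f 1) \<noteq> (1::nat))"

definition dom_cycle :: "bool \<Rightarrow> (nat \<Rightarrow> bool) \<Rightarrow> bool \<Rightarrow> bool" where
  "dom_cycle p d q \<longleftrightarrow>
     (\<not> d 1 \<longrightarrow> (2::nat) \<le> of_bool (d 2) + of_bool (d 5) + of_bool p) \<and>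
     (\<not> d 2 \<longrightarrow> (2::nat) \<le> of_bool (d 1) + of_bool (d 3)) \<and>
     (\<not> d 3 \<longrightarrow> (2::nat) \<le> of_bool (d 2) + of_bool (d 4) + of_bool q) \<and>
     (\<not> d 4 \<longrightarrow> (2::nat) \<le> of_bool (d 3) + of_bool (d 5)) \<and>
     (\<not> d 5 \<longrightarrow> (2::nat) \<le> of_bool (d 4) + of_bool (d 1))"

lemma atLeastAtMost_1_5: "{1..5::nat} = {1,2,3,4,5}"
  by auto

lemma count5_eq_card: "count5 f = card {j \<in> {1..5}. f j}"
proof -
  have "card {j \<in> {1..5::nat}. f j} = (\<Sum>j\<in>{1..5}. if f j then 1 else 0)"
    by (simp add: sum.inter_filter[symmetric])
  also have "\<dots> = count5 f"
    unfolding atLeastAtMost_1_5 count5_def by simp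
  finally show ?thesis ..
qed

lemma count5_pos: "j \<in> {1..5} \<Longrightarrow> f j \<Longrightarrow> 0 < count5 f"
  unfolding atLeastAtMost_1_5 by (auto simp: count5_def)

lemma indep5_mono: "indep5 g \<Longrightarrow> (\<And>j. h j \<Longrightarrow> g j) \<Longrightarrow> indep5 h"
  unfolding indep5_def by blast

text \<open>
  The simplifier rewrites \<open>1::nat\<close> to \<open>Suc 0\<close>, so case splits below are on \<open>f (Suc 0)\<close>, and
  rewriting with lemmas stated for position 1 needs \<open>One_nat_def\<close> disabled.
\<close>

lemma indep5_count: "indep5 g \<Longrightarrow> count5 g \<le> 2"
  unfolding indep5_def count5_def
  by (cases "g (Suc 0)"; cases "g 2"; cases "g 3"; cases "g 4"; cases "g 5"; simp)

lemma count5_3_contains_edge: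
  "count5 s = 3 \<Longrightarrow> \<exists>x\<in>{1..5}. s x \<and> \<not> indep5 (\<lambda>j. s j \<and> j \<noteq> x)"
  unfolding indep5_def count5_def atLeastAtMost_1_5
  by (cases "s (Suc 0)"; cases "s 2"; cases "s 3"; cases "s 4"; cases "s 5"; simp)

lemma count5_remove: "count5 s \<le> count5 (\<lambda>j. s j \<and> j \<noteq> x) + 1"
  unfolding count5_def by (cases "x = 1"; cases "x = 2"; cases "x = 3"; cases "x = 4"; cases "x = 5"; simp)

lemma count5_ge_2_other: "2 \<le> count5 t \<Longrightarrow> \<exists>y\<in>{1..5}. t y \<and> y \<noteq> z"
proof (rule ccontr)
  assume two: "2 \<le> count5 t" and none: "\<not> (\<exists>y\<in>{1..5}. t y \<and> y \<noteq> z)"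
  have "{j \<in> {1..5}. t j} \<subseteq> {z}"
    using none by auto
  then have "card {j \<in> {1..5}. t j} \<le> 1"
    using card_mono[of "{z}"] by fastforce
  with two show False
    by (simp add: count5_eq_card)
qed

lemma count5_ge_4: "4 \<le> count5 s \<Longrightarrow> s 1 \<or> s 3"
  unfolding count5_def
  by (cases "s (Suc 0)"; cases "s 2"; cases "s 3"; cases "s 4"; cases "s 5"; simp)

lemma count5_3_shape:
  "count5 s = 3 \<Longrightarrow> (s 1 \<Longrightarrow> indep5 (\<lambda>j. s j \<and> j \<noteq> 1)) \<Longrightarrow> (s 3 \<Longrightarrow> indep5 (\<lambda>j. s j \<and> j \<noteq> 3))
    \<Longrightarrow> s 2 \<and> (s 4 \<or> s 5)"
  unfolding indep5_def count5_def
  by (cases "s (Suc 0)"; cases "s 2"; cases "s 3"; cases "s 4"; cases "s 5"; simp)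

lemma count5_le_1_indep5: "count5 s \<le> 1 \<Longrightarrow> indep5 s"
  unfolding indep5_def count5_def
  by (cases "s (Suc 0)"; cases "s 2"; cases "s 3"; cases "s 4"; cases "s 5"; simp)

lemma indep5_avoiding_1: "indep5 t \<Longrightarrow> \<not> t 1 \<Longrightarrow> 2 \<le> count5 t \<Longrightarrow> t 2 \<or> t 5"
  unfolding indep5_def count5_def
  by (cases "t 2"; cases "t 3"; cases "t 4"; cases "t 5"; simp)

lemma count5_eq_1_not_1_3: "count5 s = 1 \<Longrightarrow> s 2 \<or> s 4 \<or> s 5 \<Longrightarrow> \<not> s 1 \<and> \<not> s 3"
  unfolding count5_def
  by (cases "s (Suc 0)"; cases "s 2"; cases "s 3"; cases "s 4"; cases "s 5"; simp)

text \<open>\<open>indep5 (\<lambda>j. \<not> f j)\<close> says that \<open>f\<close> is a vertex cover of the five-cycle.\<close>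

lemma fort_cycle_nonempty_cases:
  "fort_cycle p f q \<Longrightarrow> 0 < count5 f \<Longrightarrow>
    indep5 (\<lambda>j. \<not> f j) \<or> (p \<and> q \<and> \<not> f 1 \<and> \<not> f 3 \<and> (f 2 \<or> f 4 \<and> f 5))"
  unfolding fort_cycle_def indep5_def count5_def of_bool_def
  by (cases "f (Suc 0)"; cases "f 2"; cases "f 3"; cases "f 4"; cases "f 5"; cases p; cases q; simp)

lemma fort_cycle_empty: "fort_cycle p f q \<Longrightarrow> count5 f = 0 \<Longrightarrow> \<not> p \<and> \<not> q"
  unfolding fort_cycle_def count5_def by auto

lemma fort_cycle_if_covers: "indep5 (\<lambda>j. \<not> f j) \<Longrightarrow> fort_cycle p f q"
  unfolding fort_cycle_def indep5_def
  by (cases "f (Suc 0)"; cases "f 2"; cases "f 3"; cases "f 4"; cases "f 5"; cases p; cases q; simp)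

lemma fort_cycle_cong: "(\<And>j. j \<in> {1..5} \<Longrightarrow> f j = g j) \<Longrightarrow> fort_cycle p f q = fort_cycle p g q"
  unfolding atLeastAtMost_1_5 fort_cycle_def by simp

lemma fort_cycle_avoiding_le_2:
  assumes "count5 s \<le> 2" "s 2 \<or> s 4 \<or> s 5"
  obtains f where "fort_cycle True f True" "\<And>j. f j \<Longrightarrow> \<not> s j"
proof -
  consider "\<not> s 2" | "s 2" "\<not> s 4" "\<not> s 5" | "s 2" "s 4 \<or> s 5" by blast
  then show thesis
  proof cases
    case 1
    then show ?thesis by (intro that[of "\<lambda>j. j = 2"]) (auto simp: fort_cycle_def)
  next
    case 2
    then show ?thesis by (intro that[of "\<lambda>j. j = 4 \<or> j = 5"]) (auto simp: fort_cycle_def)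
  next
    case 3
    then have "indep5 s"
      using assms(1) unfolding indep5_def count5_def by (cases "s (Suc 0)"; cases "s 3"; auto)
    then show ?thesis by (intro that[of "\<lambda>j. \<not> s j"] fort_cycle_if_covers) auto
  qed
qed

lemma fort_cycle_avoiding_triple:
  assumes f: "fort_cycle p f q" and s: "count5 s = 3" "s 2" "s 4 \<or> s 5"
    and avoid: "\<And>j. s j \<Longrightarrow> \<not> f j"
  shows "count5 f = 0"
proof (rule ccontr)
  assume "count5 f \<noteq> 0"
  then have "indep5 (\<lambda>j. \<not> f j) \<or> f 2 \<or> f 4 \<and> f 5"
    using fort_cycle_nonempty_cases[OF f] by auto
  moreover have "\<not> indep5 (\<lambda>j. \<not> f j)"
    using indep5_mono[of "\<lambda>j. \<not> f j" s] indep5_count[of s] avoid s(1) by auto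
  ultimately show False
    using s(2,3) avoid by blast
qed

lemma dom_cycle_count: "dom_cycle p d q \<Longrightarrow> 3 \<le> count5 d"
  unfolding dom_cycle_def count5_def
  by (cases "d (Suc 0)"; cases "d 2"; cases "d 3"; cases "d 4"; cases "d 5"; simp)

section \<open>The graph H_k\<close>

definition next_cycle :: "nat \<Rightarrow> nat \<Rightarrow> nat" where
  "next_cycle k i = (if i < k then i + 1 else 1)"

definition prev_cycle :: "nat \<Rightarrow> nat \<Rightarrow> nat" where
  "prev_cycle k i = (if 1 < i then i - 1 else k)"

definition cycle_trace :: "(nat \<times> nat) set \<Rightarrow> nat \<Rightarrow> nat \<Rightarrow> bool" where
  "cycle_trace X i j \<longleftrightarrow> (i, j) \<in> X"

lemma mem_Hk_V [simp]: "(i, j) \<in> Hk_V k \<longleftrightarrow> i \<in> {1..k} \<and> j \<in> {1..5}"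
  by (auto simp: Hk_V_def)

lemma Hk_V_eq: "Hk_V k = {1..k} \<times> {1..5}"
  by auto

lemma finite_Hk_V: "finite (Hk_V k)"
  by (simp add: Hk_V_eq)

lemma card_Hk_V: "card (Hk_V k) = 5 * k"
  by (simp add: Hk_V_eq card_cartesian_product)

lemma ball_Hk_V:
  "(\<forall>v\<in>Hk_V k. P v) \<longleftrightarrow> (\<forall>i\<in>{1..k}. P (i, 1) \<and> P (i, 2) \<and> P (i, 3) \<and> P (i, 4) \<and> P (i, 5))"
  unfolding Hk_V_eq atLeastAtMost_1_5 by auto

lemma mod_5_le_5: "(b::nat) \<le> 5 \<Longrightarrow> b mod 5 = (if b = 5 then 0 else b)"
  by auto

lemma next_cycle_in: "i \<in> {1..k} \<Longrightarrow> next_cycle k i \<in> {1..k}"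
  by (auto simp: next_cycle_def)

lemma prev_cycle_in: "i \<in> {1..k} \<Longrightarrow> prev_cycle k i \<in> {1..k}"
  by (auto simp: prev_cycle_def)

lemma prev_next_cycle: "i \<in> {1..k} \<Longrightarrow> prev_cycle k (next_cycle k i) = i"
  by (auto simp: next_cycle_def prev_cycle_def)

lemma next_cycle_neq: "2 \<le> k \<Longrightarrow> i \<in> {1..k} \<Longrightarrow> next_cycle k i \<noteq> i"
  by (auto simp: next_cycle_def)

lemma prev_cycle_neq: "2 \<le> k \<Longrightarrow> i \<in> {1..k} \<Longrightarrow> prev_cycle k i \<noteq> i"
  by (auto simp: prev_cycle_def)

lemma inj_on_next_cycle: "inj_on (next_cycle k) {1..k}"
  by (auto simp: inj_on_def next_cycle_def split: if_splits)

lemma card_Hk_subset: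
  assumes "X \<subseteq> Hk_V k"
  shows "card X = (\<Sum>i\<in>{1..k}. count5 (cycle_trace X i))"
proof -
  have "X = (\<Union>i\<in>{1..k}. Pair i ` {j \<in> {1..5}. (i, j) \<in> X})"
  proof (intro equalityI subsetI)
    fix v assume v: "v \<in> X"
    obtain i j where ij: "v = (i, j)" by (cases v)
    with v assms have "i \<in> {1..k}" "j \<in> {1..5}" by auto
    with v ij show "v \<in> (\<Union>i\<in>{1..k}. Pair i ` {j \<in> {1..5}. (i, j) \<in> X})"
      by (intro UN_I[of i]) auto
  qed auto
  then have "card X = (\<Sum>i\<in>{1..k}. card (Pair i ` {j \<in> {1..5}. (i, j) \<in> X}))"
    by (rule arg_cong[where f = card, THEN trans]) (rule card_UN_disjoint; auto)
  also have "\<dots> = (\<Sum>i\<in>{1..k}. count5 (cycle_trace X i))"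
    by (simp add: card_image inj_on_def count5_eq_card cycle_trace_def)
  finally show ?thesis .
qed

definition Hk_deg2 :: "nat \<Rightarrow> (nat \<times> nat) set" where
  "Hk_deg2 k = {1..k} \<times> {2, 4, 5}"

definition Hk_deg3 :: "nat \<Rightarrow> (nat \<times> nat) set" where
  "Hk_deg3 k = {1..k} \<times> {1, 3}"

lemma Hk_deg2_subset: "Hk_deg2 k \<subseteq> Hk_V k"
  by (auto simp: Hk_deg2_def)

lemma Hk_deg3_subset: "Hk_deg3 k \<subseteq> Hk_V k"
  by (auto simp: Hk_deg3_def)

lemma card_Hk_deg2: "card (Hk_deg2 k) = 3 * k"
  by (simp add: Hk_deg2_def card_cartesian_product)

lemma card_Hk_deg3: "card (Hk_deg3 k) = 2 * k"
  by (simp add: Hk_deg3_def card_cartesian_product)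

lemma private_trace:
  assumes "S \<inter> F = {(i, x)}"
  shows "cycle_trace F i x"
    and "\<And>j. cycle_trace S i j \<Longrightarrow> j \<noteq> x \<Longrightarrow> \<not> cycle_trace F i j"
    and "\<And>i' j. i' \<noteq> i \<Longrightarrow> cycle_trace S i' j \<Longrightarrow> \<not> cycle_trace F i' j"
  using assms by (auto simp: cycle_trace_def)

definition Hk_forcing_set :: "nat \<Rightarrow> (nat \<times> nat) set" where
  "Hk_forcing_set k = {(1, 1), (1, 4)} \<union> {1..k} \<times> {2}"

lemma card_Hk_forcing_set: "card (Hk_forcing_set k) = k + 2"
proof -
  have "card (Hk_forcing_set k) = card {(1::nat, 1::nat), (1, 4)} + card ({1..k} \<times> {2::nat})"
    unfolding Hk_forcing_set_def by (rule card_Un_disjoint) auto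
  then show ?thesis
    by (simp add: card_cartesian_product)
qed

context
  fixes k :: nat
  assumes k: "2 \<le> k"
begin

lemma nbrs_Hk:
  assumes i: "i \<in> {1..k}"
  shows "nbrs (Hk_V k) (Hk_E k) (i, 1) = {(i, 2), (i, 5), (prev_cycle k i, 3)}"
    and "nbrs (Hk_V k) (Hk_E k) (i, 2) = {(i, 1), (i, 3)}"
    and "nbrs (Hk_V k) (Hk_E k) (i, 3) = {(i, 2), (i, 4), (next_cycle k i, 1)}"
    and "nbrs (Hk_V k) (Hk_E k) (i, 4) = {(i, 3), (i, 5)}"
    and "nbrs (Hk_V k) (Hk_E k) (i, 5) = {(i, 4), (i, 1)}"
  using k i unfolding nbrs_def Hk_E_def Hk_link_def next_cycle_def prev_cycle_def
  by (auto simp: mod_5_le_5 split: if_splits)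

lemma card_nbrs_Hk_Int:
  assumes i: "i \<in> {1..k}"
  shows "card (nbrs (Hk_V k) (Hk_E k) (i, 1) \<inter> X)
           = of_bool ((i, 2) \<in> X) + of_bool ((i, 5) \<in> X) + of_bool ((prev_cycle k i, 3) \<in> X)"
    and "card (nbrs (Hk_V k) (Hk_E k) (i, 2) \<inter> X) = of_bool ((i, 1) \<in> X) + of_bool ((i, 3) \<in> X)"
    and "card (nbrs (Hk_V k) (Hk_E k) (i, 3) \<inter> X)
           = of_bool ((i, 2) \<in> X) + of_bool ((i, 4) \<in> X) + of_bool ((next_cycle k i, 1) \<in> X)"
    and "card (nbrs (Hk_V k) (Hk_E k) (i, 4) \<inter> X) = of_bool ((i, 3) \<in> X) + of_bool ((i, 5) \<in> X)"
    and "card (nbrs (Hk_V k) (Hk_E k) (i, 5) \<inter> X) = of_bool ((i, 4) \<in> X) + of_bool ((i, 1) \<in> X)"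
  by (simp_all add: nbrs_Hk[OF i] card_insert_Int del: One_nat_def)

lemma min_degree_Hk: "min_degree (Hk_V k) (Hk_E k) = 2"
  unfolding min_degree_def
proof (rule Min_eqI)
  show "finite ((\<lambda>v. card (nbrs (Hk_V k) (Hk_E k) v)) ` Hk_V k)"
    by (simp add: finite_Hk_V)
  have "\<forall>v\<in>Hk_V k. 2 \<le> card (nbrs (Hk_V k) (Hk_E k) v)"
    unfolding ball_Hk_V by (intro ballI) (simp add: nbrs_Hk del: One_nat_def)
  then show "2 \<le> d" if "d \<in> (\<lambda>v. card (nbrs (Hk_V k) (Hk_E k) v)) ` Hk_V k" for d
    using that by auto
  have "card (nbrs (Hk_V k) (Hk_E k) (1, 2)) = 2"
    using k by (simp add: nbrs_Hk del: One_nat_def)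
  then show "2 \<in> (\<lambda>v. card (nbrs (Hk_V k) (Hk_E k) v)) ` Hk_V k"
    using k by (auto intro!: image_eqI[of _ _ "(1, 2)"])
qed

lemma is_fort_Hk_iff:
  "is_fort (Hk_V k) (Hk_E k) F \<longleftrightarrow> F \<noteq> {} \<and> F \<subseteq> Hk_V k \<and>
     (\<forall>i\<in>{1..k}. fort_cycle ((prev_cycle k i, 3) \<in> F) (cycle_trace F i) ((next_cycle k i, 1) \<in> F))"
proof -
  have "(\<forall>v\<in>Hk_V k - F. card (nbrs (Hk_V k) (Hk_E k) v \<inter> F) \<noteq> 1)
      \<longleftrightarrow> (\<forall>v\<in>Hk_V k. v \<notin> F \<longrightarrow> card (nbrs (Hk_V k) (Hk_E k) v \<inter> F) \<noteq> 1)"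
    by blast
  also have "\<dots> \<longleftrightarrow>
      (\<forall>i\<in>{1..k}. fort_cycle ((prev_cycle k i, 3) \<in> F) (cycle_trace F i) ((next_cycle k i, 1) \<in> F))"
    unfolding ball_Hk_V
    by (intro ball_cong refl) (simp add: card_nbrs_Hk_Int fort_cycle_def cycle_trace_def del: One_nat_def)
  finally show ?thesis
    unfolding is_fort_def by blast
qed

lemma fort_cycle_Hk:
  assumes "is_fort (Hk_V k) (Hk_E k) F" "i \<in> {1..k}"
  shows "fort_cycle ((prev_cycle k i, 3) \<in> F) (cycle_trace F i) ((next_cycle k i, 1) \<in> F)"
  using assms by (simp add: is_fort_Hk_iff)

lemma is_fort_Hk_coverI:
  assumes "F \<subseteq> Hk_V k" "F \<noteq> {}" "\<And>i. i \<in> {1..k} \<Longrightarrow> indep5 (\<lambda>j. \<not> cycle_trace F i j)"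
  shows "is_fort (Hk_V k) (Hk_E k) F"
  using assms by (simp add: is_fort_Hk_iff fort_cycle_if_covers)

lemma two_dominating_Hk_iff:
  "two_dominating (Hk_V k) (Hk_E k) D \<longleftrightarrow> D \<subseteq> Hk_V k \<and>
     (\<forall>i\<in>{1..k}. dom_cycle ((prev_cycle k i, 3) \<in> D) (cycle_trace D i) ((next_cycle k i, 1) \<in> D))"
proof -
  have "(\<forall>v\<in>Hk_V k - D. 2 \<le> card (nbrs (Hk_V k) (Hk_E k) v \<inter> D))
      \<longleftrightarrow> (\<forall>v\<in>Hk_V k. v \<notin> D \<longrightarrow> 2 \<le> card (nbrs (Hk_V k) (Hk_E k) v \<inter> D))"
    by blast
  also have "\<dots> \<longleftrightarrow>
      (\<forall>i\<in>{1..k}. dom_cycle ((prev_cycle k i, 3) \<in> D) (cycle_trace D i) ((next_cycle k i, 1) \<in> D))"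
    unfolding ball_Hk_V
    by (intro ball_cong refl) (simp add: card_nbrs_Hk_Int dom_cycle_def cycle_trace_def del: One_nat_def)
  finally show ?thesis
    unfolding two_dominating_def by blast
qed

lemma gamma2_Hk: "gamma2 (Hk_V k) (Hk_E k) = 3 * k"
proof -
  have "two_dominating (Hk_V k) (Hk_E k) (Hk_deg2 k)"
    using Hk_deg2_subset
    by (auto simp: two_dominating_Hk_iff dom_cycle_def cycle_trace_def Hk_deg2_def)
  moreover have "card (Hk_deg2 k) \<le> card D" if "two_dominating (Hk_V k) (Hk_E k) D" for D
  proof -
    have D: "D \<subseteq> Hk_V k" "\<forall>i\<in>{1..k}. 3 \<le> count5 (cycle_trace D i)"
      using that dom_cycle_count by (auto simp: two_dominating_Hk_iff)
    then have "(\<Sum>i\<in>{1..k}. 3) \<le> (\<Sum>i\<in>{1..k}. count5 (cycle_trace D i))"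
      by (intro sum_mono) auto
    then show ?thesis
      by (simp add: card_Hk_subset[OF D(1)] card_Hk_deg2)
  qed
  ultimately show ?thesis
    unfolding gamma2_def card_Hk_deg2[symmetric]
    by (intro Min_card_eqI[OF finite_Hk_V]) (auto simp: two_dominating_def)
qed

section \<open>ZIr-sets of H_k\<close>

lemma ZIr_indep_without_deg3:
  assumes S: "ZIr_set (Hk_V k) (Hk_E k) S" and i: "i \<in> {1..k}"
    and x: "x \<in> {1, 3}" "cycle_trace S i x"
  shows "indep5 (\<lambda>j. cycle_trace S i j \<and> j \<noteq> x)"
proof -
  obtain F where F: "is_fort (Hk_V k) (Hk_E k) F" "S \<inter> F = {(i, x)}"
    using S x(2) by (auto simp: cycle_trace_def elim: private_fortE)
  have "x \<in> {1..5}"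
    using x(1) by auto
  then have "0 < count5 (cycle_trace F i)"
    using private_trace(1)[OF F(2)] by (rule count5_pos)
  then have "indep5 (\<lambda>j. \<not> cycle_trace F i j)"
    using fort_cycle_nonempty_cases[OF fort_cycle_Hk[OF F(1) i]] x(1) private_trace(1)[OF F(2)]
    by blast
  then show ?thesis
    by (rule indep5_mono) (use private_trace(2)[OF F(2)] in blast)
qed

lemma ZIr_count_le_3:
  assumes S: "ZIr_set (Hk_V k) (Hk_E k) S" and i: "i \<in> {1..k}"
  shows "count5 (cycle_trace S i) \<le> 3"
proof (rule ccontr)
  assume many: "\<not> ?thesis"
  then obtain x where x: "x \<in> {1, 3}" "cycle_trace S i x"
    using count5_ge_4[of "cycle_trace S i"] by auto
  have "count5 (cycle_trace S i) \<le> count5 (\<lambda>j. cycle_trace S i j \<and> j \<noteq> x) + 1"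
    by (rule count5_remove)
  also have "\<dots> \<le> 3"
    using indep5_count[OF ZIr_indep_without_deg3[OF S i x]] by simp
  finally show False
    using many by simp
qed

lemma ZIr_count_3_shape:
  assumes S: "ZIr_set (Hk_V k) (Hk_E k) S" and i: "i \<in> {1..k}"
    and three: "count5 (cycle_trace S i) = 3"
  shows "cycle_trace S i 2 \<and> (cycle_trace S i 4 \<or> cycle_trace S i 5)"
  using three ZIr_indep_without_deg3[OF S i] by (intro count5_3_shape) auto

lemma ZIr_count_3_next:
  assumes S: "ZIr_set (Hk_V k) (Hk_E k) S" and i: "i \<in> {1..k}"
    and three: "count5 (cycle_trace S i) = 3"
  shows "indep5 (cycle_trace S (next_cycle k i)) \<and> \<not> cycle_trace S (next_cycle k i) 1"
proof -
  let ?i' = "next_cycle k i"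
  have i': "?i' \<in> {1..k}" "?i' \<noteq> i" "prev_cycle k ?i' = i"
    using next_cycle_in[OF i] next_cycle_neq[OF k i] prev_next_cycle[OF i] by blast+
  obtain x where x: "x \<in> {1..5}" "cycle_trace S i x"
    and edge: "\<not> indep5 (\<lambda>j. cycle_trace S i j \<and> j \<noteq> x)"
    using count5_3_contains_edge[OF three] by blast
  obtain F where F: "is_fort (Hk_V k) (Hk_E k) F" "S \<inter> F = {(i, x)}"
    using S x(2) by (auto simp: cycle_trace_def elim: private_fortE)
  txt \<open>The private fort of \<open>x\<close> misses an edge of cycle \<open>i\<close>, so its trace there is exceptional.\<close>
  have "\<not> indep5 (\<lambda>j. \<not> cycle_trace F i j)"
  proof
    assume "indep5 (\<lambda>j. \<not> cycle_trace F i j)"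
    then have "indep5 (\<lambda>j. cycle_trace S i j \<and> j \<noteq> x)"
      by (rule indep5_mono) (use private_trace(2)[OF F(2)] in blast)
    with edge show False ..
  qed
  then have link: "(?i', 1) \<in> F" "\<not> cycle_trace F i 3"
    using fort_cycle_nonempty_cases[OF fort_cycle_Hk[OF F(1) i] count5_pos[OF x(1)]]
      private_trace(1)[OF F(2)] by blast+
  have "(prev_cycle k ?i', 3) \<notin> F"
    using link(2) i'(3) by (simp add: cycle_trace_def)
  moreover have "0 < count5 (cycle_trace F ?i')"
    using link(1) by (intro count5_pos[of 1]) (simp_all add: cycle_trace_def)
  ultimately have "indep5 (\<lambda>j. \<not> cycle_trace F ?i' j)"
    using fort_cycle_nonempty_cases[OF fort_cycle_Hk[OF F(1) i'(1)]] by blast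
  then have "indep5 (cycle_trace S ?i')"
    by (rule indep5_mono) (use private_trace(3)[OF F(2) i'(2)] in blast)
  moreover have "\<not> cycle_trace S ?i' 1"
    using link(1) private_trace(3)[OF F(2) i'(2)] by (auto simp: cycle_trace_def)
  ultimately show ?thesis ..
qed

lemma ZIr_count_3_next_le_1:
  assumes S: "ZIr_set (Hk_V k) (Hk_E k) S" and i: "i \<in> {1..k}"
    and three: "count5 (cycle_trace S i) = 3"
  shows "count5 (cycle_trace S (next_cycle k i)) \<le> 1"
proof (rule ccontr)
  let ?i' = "next_cycle k i" and ?t = "cycle_trace S (next_cycle k i)"
  assume "\<not> count5 ?t \<le> 1"
  then have two: "2 \<le> count5 ?t" by simp
  have i': "?i' \<in> {1..k}" "i \<noteq> ?i'" "prev_cycle k ?i' = i"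
    using next_cycle_in[OF i] next_cycle_neq[OF k i] prev_next_cycle[OF i] by auto
  have t: "indep5 ?t" "\<not> ?t 1"
    using ZIr_count_3_next[OF S i three] by auto
  obtain z where z: "z \<in> {2, 5}" "?t z"
    using indep5_avoiding_1[OF t two] by auto
  obtain y where y: "y \<in> {1..5}" "?t y" "y \<noteq> z"
    using count5_ge_2_other[OF two] by blast
  obtain G where G: "is_fort (Hk_V k) (Hk_E k) G" "S \<inter> G = {(?i', y)}"
    using S y(2) by (auto simp: cycle_trace_def elim: private_fortE)
  txt \<open>
    The private fort of \<open>y\<close> avoids the three vertices of \<open>S\<close> on cycle \<open>i\<close>, hence the whole cycle;
    then its trace on the next cycle must be a vertex cover, but it misses the edge between
    positions 1 and \<open>z\<close>.
  \<close>
  have "count5 (cycle_trace G i) = 0"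
    using fort_cycle_avoiding_triple[OF fort_cycle_Hk[OF G(1) i] three]
      ZIr_count_3_shape[OF S i three] private_trace(3)[OF G(2) i'(2)] by blast
  then have "(?i', 1) \<notin> G" and "(prev_cycle k ?i', 3) \<notin> G"
    using fort_cycle_empty[OF fort_cycle_Hk[OF G(1) i]] i'(3)
    by (auto simp: count5_def cycle_trace_def)
  moreover have "0 < count5 (cycle_trace G ?i')"
    using count5_pos[of y "cycle_trace G ?i'"] y(1) private_trace(1)[OF G(2)] by blast
  ultimately have "indep5 (\<lambda>j. \<not> cycle_trace G ?i' j)"
    using fort_cycle_nonempty_cases[OF fort_cycle_Hk[OF G(1) i'(1)]] by blast
  moreover have "\<not> cycle_trace G ?i' z"
    using private_trace(2)[OF G(2) z(2)] y(3) by blast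
  ultimately show False
    using z(1) \<open>(?i', 1) \<notin> G\<close> by (auto simp: indep5_def cycle_trace_def)
qed

lemma ZIr_card_le:
  assumes S: "ZIr_set (Hk_V k) (Hk_E k) S"
  shows "card S \<le> 2 * k"
proof -
  define c where "c i = count5 (cycle_trace S i)" for i
  define A where "A = {i \<in> {1..k}. c i = 3}"
  have A: "A \<subseteq> {1..k}" "next_cycle k ` A \<subseteq> {1..k}"
    using next_cycle_in by (auto simp: A_def)
  have after_A: "c i \<le> 1" if "i \<in> next_cycle k ` A" for i
    using that ZIr_count_3_next_le_1[OF S] by (auto simp: A_def c_def)
  have card_S: "int (card S) = (\<Sum>i\<in>{1..k}. int (c i))"
    using S card_Hk_subset[of S k] by (simp add: ZIr_set_def c_def)
  txt \<open>A cycle in \<open>A\<close> carries one vertex above average, its successor at least one below.\<close>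
  have "int (c i) \<le> 2 + of_bool (i \<in> A) - of_bool (i \<in> next_cycle k ` A)" if "i \<in> {1..k}" for i
    using ZIr_count_le_3[OF S that] after_A[of i] that
    by (cases "i \<in> A"; cases "i \<in> next_cycle k ` A") (auto simp: A_def c_def)
  then have "(\<Sum>i\<in>{1..k}. int (c i))
      \<le> (\<Sum>i\<in>{1..k}. 2 + of_bool (i \<in> A) - of_bool (i \<in> next_cycle k ` A))"
    by (rule sum_mono)
  also have "\<dots> = 2 * int k + int (card A) - int (card (next_cycle k ` A))"
    using A by (simp add: sum.distrib sum_subtractf Int_absorb1)
  also have "card (next_cycle k ` A) = card A"
    using inj_on_subset[OF inj_on_next_cycle A(1)] by (rule card_image)
  finally show ?thesis
    using card_S by simp
qed

lemma is_fort_Hk_deg2_superset: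
  assumes "Hk_deg2 k \<subseteq> F" "F \<subseteq> Hk_V k"
  shows "is_fort (Hk_V k) (Hk_E k) F"
proof (rule is_fort_Hk_coverI)
  show "F \<noteq> {}"
    using assms(1) k by (auto simp: Hk_deg2_def)
  show "indep5 (\<lambda>j. \<not> cycle_trace F i j)" if "i \<in> {1..k}" for i
  proof -
    have "(i, j) \<in> F" if "j \<in> {2, 4, 5}" for j
      using assms(1) \<open>i \<in> {1..k}\<close> that by (auto simp: Hk_deg2_def)
    then show ?thesis
      by (simp add: indep5_def cycle_trace_def)
  qed
qed (rule assms(2))

lemma ZIr_Hk_deg3: "ZIr_set (Hk_V k) (Hk_E k) (Hk_deg3 k)"
  unfolding ZIr_set_def private_fort_def
proof (intro conjI ballI Hk_deg3_subset)
  fix x assume x: "x \<in> Hk_deg3 k"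
  have "is_fort (Hk_V k) (Hk_E k) (insert x (Hk_deg2 k))"
    using x Hk_deg2_subset Hk_deg3_subset by (intro is_fort_Hk_deg2_superset) auto
  moreover have "Hk_deg3 k \<inter> insert x (Hk_deg2 k) = {x}"
    using x by (auto simp: Hk_deg2_def Hk_deg3_def)
  ultimately show "\<exists>F. is_fort (Hk_V k) (Hk_E k) F \<and> Hk_deg3 k \<inter> F = {x}"
    by blast
qed

lemma maximal_ZIr_Hk_deg3: "maximal_ZIr_set (Hk_V k) (Hk_E k) (Hk_deg3 k)"
  unfolding maximal_ZIr_set_def
proof (intro conjI allI impI ZIr_Hk_deg3)
  fix T assume T: "ZIr_set (Hk_V k) (Hk_E k) T \<and> Hk_deg3 k \<subseteq> T"
  show "T = Hk_deg3 k"
  proof (rule ccontr)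
    assume "T \<noteq> Hk_deg3 k"
    then obtain i j where ij: "(i, j) \<in> T" "(i, j) \<notin> Hk_deg3 k"
      using T by auto
    then have i: "i \<in> {1..k}" and j: "j \<in> {2, 4, 5}"
      using T by (auto simp: ZIr_set_def Hk_deg3_def)
    have deg3: "(m, 1) \<in> T" "(m, 3) \<in> T" if "m \<in> {1..k}" for m
      using T that by (auto simp: Hk_deg3_def)
    have "3 \<le> count5 (cycle_trace T i)"
      using deg3[OF i] ij(1) j by (auto simp: count5_def cycle_trace_def)
    then have "count5 (cycle_trace T (next_cycle k i)) \<le> 1"
      using ZIr_count_le_3[OF _ i] ZIr_count_3_next_le_1[OF _ i] T by (simp add: le_antisym)
    moreover have "2 \<le> count5 (cycle_trace T (next_cycle k i))"
      using deg3[OF next_cycle_in[OF i]] by (simp add: count5_def cycle_trace_def)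
    ultimately show False
      by simp
  qed
qed

lemma ZIR_Hk: "ZIR (Hk_V k) (Hk_E k) = 2 * k"
  unfolding ZIR_def card_Hk_deg3[symmetric]
  using maximal_ZIr_Hk_deg3 ZIr_card_le
  by (intro Max_card_eqI[OF finite_Hk_V])
    (auto simp: maximal_ZIr_set_def ZIr_set_def card_Hk_deg3)

section \<open>Zero forcing sets of H_k\<close>

lemma is_fort_Hk_cycle_deg2:
  assumes i: "i \<in> {1..k}"
  shows "is_fort (Hk_V k) (Hk_E k) ({i} \<times> {2, 4, 5})"
  using i by (auto simp: is_fort_Hk_iff fort_cycle_def cycle_trace_def)

lemma zero_forcing_Hk_meets_deg2:
  assumes "zero_forcing_set (Hk_V k) (Hk_E k) S" "i \<in> {1..k}"
  shows "cycle_trace S i 2 \<or> cycle_trace S i 4 \<or> cycle_trace S i 5"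
  using zero_forcing_set_meets_fort[OF assms(1) is_fort_Hk_cycle_deg2[OF assms(2)]]
  by (auto simp: cycle_trace_def)

lemma Hk_fort_avoiding:
  assumes S: "S \<subseteq> Hk_V k" and j0: "j0 \<in> {1..k}"
    and meets: "\<And>i. i \<in> {1..k} \<Longrightarrow> cycle_trace S i 2 \<or> cycle_trace S i 4 \<or> cycle_trace S i 5"
    and few: "count5 (cycle_trace S j0) \<le> 2"
    and one: "\<And>i. i \<in> {1..k} - {j0} \<Longrightarrow> count5 (cycle_trace S i) = 1"
  obtains F where "is_fort (Hk_V k) (Hk_E k) F" "F \<inter> S = {}"
proof -
  have other: "\<not> cycle_trace S i 1 \<and> \<not> cycle_trace S i 3 \<and> indep5 (cycle_trace S i)"
    if "i \<in> {1..k} - {j0}" for i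
    using count5_eq_1_not_1_3[OF one[OF that] meets] count5_le_1_indep5 one[OF that] that by auto
  obtain f where f: "fort_cycle True f True" "\<And>j. f j \<Longrightarrow> \<not> cycle_trace S j0 j"
    using fort_cycle_avoiding_le_2[OF few meets[OF j0]] by blast
  txt \<open>
    On the other cycles the complement of \<open>S\<close> is a vertex cover; in particular it contains
    the outside neighbours of cycle \<open>j0\<close>, as \<open>f\<close> requires.
  \<close>
  define F where "F = {(i, j) \<in> Hk_V k. if i = j0 then f j else (i, j) \<notin> S}"
  have nxt: "next_cycle k j0 \<in> {1..k} - {j0}" and prv: "prev_cycle k j0 \<in> {1..k} - {j0}"
    using next_cycle_in[OF j0] next_cycle_neq[OF k j0] prev_cycle_in[OF j0] prev_cycle_neq[OF k j0]
    by auto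
  have "(next_cycle k j0, 1) \<in> F" "(prev_cycle k j0, 3) \<in> F"
    using other[OF nxt] other[OF prv] nxt prv by (auto simp: F_def cycle_trace_def)
  moreover have "fort_cycle ((prev_cycle k i, 3) \<in> F) (cycle_trace F i) ((next_cycle k i, 1) \<in> F)"
    if i: "i \<in> {1..k}" for i
  proof (cases "i = j0")
    case True
    have "fort_cycle True (cycle_trace F j0) True"
      using f(1) j0 by (subst fort_cycle_cong[where g = f]) (auto simp: F_def cycle_trace_def)
    with True \<open>(next_cycle k j0, 1) \<in> F\<close> \<open>(prev_cycle k j0, 3) \<in> F\<close> show ?thesis
      by simp
  next
    case False
    have "indep5 (\<lambda>j. \<not> \<not> cycle_trace S i j)"
      using other[of i] i False by simp
    then have "fort_cycle ((prev_cycle k i, 3) \<in> F) (\<lambda>j. \<not> cycle_trace S i j) ((next_cycle k i, 1) \<in> F)"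
      by (rule fort_cycle_if_covers)
    then show ?thesis
      using i False by (subst fort_cycle_cong[where g = "\<lambda>j. \<not> cycle_trace S i j"])
        (auto simp: F_def cycle_trace_def)
  qed
  ultimately have "is_fort (Hk_V k) (Hk_E k) F"
    unfolding is_fort_Hk_iff F_def by blast
  moreover have "F \<inter> S = {}"
    using f(2) by (auto simp: F_def cycle_trace_def)
  ultimately show thesis
    by (rule that)
qed

lemma zero_forcing_Hk_card_ge:
  assumes S: "zero_forcing_set (Hk_V k) (Hk_E k) S"
  shows "k + 2 \<le> card S"
proof (rule ccontr)
  assume "\<not> k + 2 \<le> card S"
  define c where "c i = count5 (cycle_trace S i)" for i
  have sub: "S \<subseteq> Hk_V k"
    using S by (simp add: zero_forcing_set_def)
  have meets: "cycle_trace S i 2 \<or> cycle_trace S i 4 \<or> cycle_trace S i 5" if "i \<in> {1..k}" for i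
    using zero_forcing_Hk_meets_deg2[OF S that] .
  have pos: "1 \<le> c i" if "i \<in> {1..k}" for i
    using meets[OF that] count5_pos[of 2 "cycle_trace S i"] count5_pos[of 4 "cycle_trace S i"]
      count5_pos[of 5 "cycle_trace S i"] by (auto simp: c_def)
  have small: "sum c {1..k} \<le> card {1..k} + 1"
    using \<open>\<not> k + 2 \<le> card S\<close> card_Hk_subset[OF sub] by (simp add: c_def)
  have "{1..k} \<noteq> {}"
    using k by simp
  then obtain j0 where "j0 \<in> {1..k}" "c j0 \<le> 2" "\<And>i. i \<in> {1..k} - {j0} \<Longrightarrow> c i = 1"
    using sum_ge_1_le_card_Suc[OF finite_atLeastAtMost _ pos small] by blast
  then obtain F where "is_fort (Hk_V k) (Hk_E k) F" "F \<inter> S = {}"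
    using Hk_fort_avoiding[OF sub _ meets] by (auto simp: c_def)
  then show False
    using zero_forcing_set_meets_fort[OF S] by blast
qed

lemma zf_closure_Hk_forcing_set_first:
  assumes j: "j \<in> {1..5}"
  shows "(1, j) \<in> zf_closure (Hk_V k) (Hk_E k) (Hk_forcing_set k)"
proof -
  let ?cl = "zf_closure (Hk_V k) (Hk_E k) (Hk_forcing_set k)"
  have one: "1 \<in> {1..k}"
    using k by simp
  have v1: "(1, 1) \<in> ?cl" and v2: "(1, 2) \<in> ?cl" and v4: "(1, 4) \<in> ?cl"
    using one by (intro zf_closure.init; simp add: Hk_forcing_set_def)+
  have v3: "(1, 3) \<in> ?cl"
    by (rule zf_closure.force[OF v2]) (use v1 nbrs_Hk(2)[OF one] in auto)
  have v5: "(1, 5) \<in> ?cl"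
    by (rule zf_closure.force[OF v4]) (use v3 nbrs_Hk(4)[OF one] in auto)
  show ?thesis
    using j v1 v2 v3 v4 v5 unfolding atLeastAtMost_1_5 by auto
qed

lemma zf_closure_Hk_forcing_set_step:
  assumes i: "1 \<le> i" "i < k" and j: "j \<in> {1..5}"
    and prev: "\<And>j. j \<in> {1..5} \<Longrightarrow> (i, j) \<in> zf_closure (Hk_V k) (Hk_E k) (Hk_forcing_set k)"
  shows "(Suc i, j) \<in> zf_closure (Hk_V k) (Hk_E k) (Hk_forcing_set k)"
proof -
  let ?cl = "zf_closure (Hk_V k) (Hk_E k) (Hk_forcing_set k)"
  have i0: "i \<in> {1..k}" and i1: "Suc i \<in> {1..k}"
    using i by auto
  have nxt: "next_cycle k i = Suc i" and prv: "prev_cycle k (Suc i) = i"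
    using i by (simp_all add: next_cycle_def prev_cycle_def)
  have w1: "(Suc i, 1) \<in> ?cl"
    by (rule zf_closure.force[OF prev[of 3]]) (use prev nbrs_Hk(3)[OF i0] nxt in auto)
  have w2: "(Suc i, 2) \<in> ?cl"
    using i1 by (intro zf_closure.init) (simp_all add: Hk_forcing_set_def)
  have w3: "(Suc i, 3) \<in> ?cl"
    by (rule zf_closure.force[OF w2]) (use w1 nbrs_Hk(2)[OF i1] in auto)
  have w5: "(Suc i, 5) \<in> ?cl"
    by (rule zf_closure.force[OF w1]) (use w2 prev nbrs_Hk(1)[OF i1] prv in auto)
  have w4: "(Suc i, 4) \<in> ?cl"
    by (rule zf_closure.force[OF w5]) (use w1 nbrs_Hk(5)[OF i1] in auto)
  show ?thesis
    using j w1 w2 w3 w4 w5 unfolding atLeastAtMost_1_5 by auto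
qed

lemma zero_forcing_Hk_forcing_set: "zero_forcing_set (Hk_V k) (Hk_E k) (Hk_forcing_set k)"
proof -
  let ?cl = "zf_closure (Hk_V k) (Hk_E k) (Hk_forcing_set k)"
  have "i \<le> k \<longrightarrow> (\<forall>j\<in>{1..5}. (i, j) \<in> ?cl)" if "1 \<le> i" for i
    using that
  proof (induction i rule: nat_induct_at_least)
    case base
    then show ?case using zf_closure_Hk_forcing_set_first by auto
  next
    case (Suc i)
    then show ?case using zf_closure_Hk_forcing_set_step[of i] by auto
  qed
  then have "Hk_V k \<subseteq> ?cl"
    by (auto simp: Hk_V_eq)
  moreover have "Hk_forcing_set k \<subseteq> Hk_V k"
    using k by (auto simp: Hk_forcing_set_def)
  ultimately show ?thesis
    using zf_closure_subset[of "Hk_V k" "Hk_E k" "Hk_forcing_set k"]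
    by (auto simp: zero_forcing_set_def)
qed

lemma Z_Hk: "Z (Hk_V k) (Hk_E k) = k + 2"
  unfolding Z_def card_Hk_forcing_set[symmetric]
  using zero_forcing_Hk_forcing_set zero_forcing_Hk_card_ge
  by (intro Min_card_eqI[OF finite_Hk_V])
    (auto simp: zero_forcing_set_def card_Hk_forcing_set)

end

theorem theorem4p8:
  fixes k :: nat
  assumes "k \<ge> 2"
  shows "card (Hk_V k) = 5 * k
    \<and> min_degree (Hk_V k) (Hk_E k) = 2
    \<and> real (gamma2 (Hk_V k) (Hk_E k)) = 3 * real (card (Hk_V k)) / 5
    \<and> real (ZIR (Hk_V k) (Hk_E k)) = 2 * real (card (Hk_V k)) / 5
    \<and> ZIR (Hk_V k) (Hk_E k) = card (Hk_V k) - gamma2 (Hk_V k) (Hk_E k)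
    \<and> Z (Hk_V k) (Hk_E k) = k + 2"
  using card_Hk_V min_degree_Hk[OF assms] gamma2_Hk[OF assms] ZIR_Hk[OF assms] Z_Hk[OF assms]
  by simp

end
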